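(* Let $r\ge 0$, $k\ge r$ and $t>r+1$ be integers, and let $\Omega=\lfloor tr/(t-1)\rfloor+1$, $a=t(r+1)+(1-t)\Omega$, $b=t-1-a$. Then \[t\binom{k+2-(r+1)}{2}-b\binom{k+2-\Omega}{2}-a\binom{k+2-(\Omega+1)}{2}=\binom{k+2}{2}-\binom{r+2}{2}-\sum_{j=1}^{k-r}(r+j+1-j\,t)_+ .\]
   Context: $(x)_+=\max(x,0)$; an empty sum is $0$. Binomial coefficients follow the convention $\binom{m}{2}=m(m-1)/2$ for integers $m\ge 2$ and $\binom{m}{2}=0$ for $m<2$. *)

theory Defs
  imports Complex_Main
begin

definition binom2 :: "int \<Rightarrow> int" where
  "binom2 m = (if m \<ge> 2 then m * (m - 1) div 2 else 0)"

definition pos_part :: "int \<Rightarrow> int" where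
  "pos_part x = max x 0"

end

theory Submission
  imports Defs
begin

text \<open>Since \<open>0 \<le> r < t - 1\<close>, \<open>tr/(t-1) = r + r/(t-1)\<close> has floor \<open>r\<close>, so \<open>\<Omega> = a = r + 1\<close>
  and \<open>b = t - r - 2\<close>. Each summand \<open>(r + 1 - j(t-1))\<^sub>+\<close> vanishes, and what remains is the
  polynomial identity \<open>(r+2) C(k+1-r,2) - (r+1) C(k-r,2) = C(k+2,2) - C(r+2,2)\<close>.\<close>

lemma binom2_double:
  assumes "m \<ge> 0" shows "2 * binom2 m = m * (m - 1)"
proof (cases "m \<ge> 2")
  case False
  with assms have "m = 0 \<or> m = 1" by auto
  then show ?thesis by (auto simp: binom2_def)
qed (simp add: binom2_def)

lemma floor_mult_div_pred:
  fixes r t :: int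
  assumes "0 \<le> r" "r < t - 1"
  shows "\<lfloor>of_int (t * r) / (of_int (t - 1) :: real)\<rfloor> = r"
proof -
  have "t * r = r * (t - 1) + r" by (simp add: algebra_simps)
  then have "(t * r) div (t - 1) = r"
    using assms by (simp add: div_pos_pos_trivial)
  then show ?thesis
    using floor_divide_of_int_eq [of "t * r" "t - 1", where 'a = real] by simp
qed

lemma pos_part_summand_eq_0:
  fixes r t j :: int
  assumes "0 \<le> r" "r + 1 \<le> t - 1" "j \<ge> 1"
  shows "pos_part (r + j + 1 - j * t) = 0"
proof -
  have "1 * (t - 1) \<le> j * (t - 1)" using assms by (intro mult_right_mono) auto
  then show ?thesis using assms by (simp add: pos_part_def algebra_simps)
qed

lemma binom2_weighted_difference:
  fixes r k :: int
  assumes "0 \<le> r" "r \<le> k"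
  shows "(r + 2) * binom2 (k + 1 - r) - (r + 1) * binom2 (k - r)
         = binom2 (k + 2) - binom2 (r + 2)"
proof -
  have "2 * ((r + 2) * binom2 (k + 1 - r) - (r + 1) * binom2 (k - r))
        = (r + 2) * (2 * binom2 (k + 1 - r)) - (r + 1) * (2 * binom2 (k - r))"
    by (simp add: algebra_simps)
  also have "\<dots> = (k + 2) * (k + 1) - (r + 2) * (r + 1)"
    using assms by (simp add: binom2_double algebra_simps)
  also have "\<dots> = 2 * (binom2 (k + 2) - binom2 (r + 2))"
    using assms by (simp add: binom2_double algebra_simps)
  finally show ?thesis by simp
qed

theorem lemma4p3:
  fixes r k t :: int
  assumes "r \<ge> 0" and "k \<ge> r" and "t > r + 1"
  shows "let Om = \<lfloor>of_int (t * r) / (of_int (t - 1) :: real)\<rfloor> + 1;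
             a = t * (r + 1) + (1 - t) * Om;
             b = t - 1 - a
         in t * binom2 (k + 2 - (r + 1)) - b * binom2 (k + 2 - Om)
              - a * binom2 (k + 2 - (Om + 1))
            = binom2 (k + 2) - binom2 (r + 2)
              - (\<Sum>j\<in>{1..k - r}. pos_part (r + j + 1 - j * t))"
proof -
  have Om: "\<lfloor>of_int (t * r) / (of_int (t - 1) :: real)\<rfloor> + 1 = r + 1"
    using assms floor_mult_div_pred [of r t] by simp
  have sum: "(\<Sum>j\<in>{1..k - r}. pos_part (r + j + 1 - j * t)) = 0"
    using assms by (intro sum.neutral) (simp add: pos_part_summand_eq_0)
  have "t * binom2 (k + 2 - (r + 1)) - (t - 1 - (r + 1)) * binom2 (k + 2 - (r + 1))
          - (r + 1) * binom2 (k + 2 - (r + 1 + 1))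
        = (r + 2) * binom2 (k + 1 - r) - (r + 1) * binom2 (k - r)"
    by (simp add: algebra_simps)
  also have "\<dots> = binom2 (k + 2) - binom2 (r + 2)"
    using assms by (simp add: binom2_weighted_difference)
  finally show ?thesis
    unfolding Let_def Om sum by (simp add: algebra_simps)
qed

end
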